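(* Let $\{X^I\}_{I\in\mathcal{I}}$ satisfy conditions (i)–(v) of the context. Then for every $\varepsilon>0$ there is $M>0$ such that $\mathbb{P}(X^{[0,2^n]}(1)\ge M)\le\varepsilon$ for all $n\in\mathbb{N}$.
   Context: $\mathcal{I}$ is the set of closed bounded intervals of $\mathbb{R}$. For each $I\in\mathcal{I}$, $X^I=(X^I(t))_{t\in I}$ is a real stochastic process. Assume: (i) $\mathbb{E}[\log^+|X^I(t)|]<\infty$ for all $I$, $t\in I$. (ii) $\lim_{s\to t}\mathbb{P}(|X^I(t)-X^I(s)|>\varepsilon)=0$ for all $\varepsilon>0$. (iii) $X^{[a,b]}(a)=X^{[a,b]}(b)=0$. (iv) For $I'=[a,b]\subset I$, conditionally on $(X^I(t))_{t\in I\setminus I'}$, $(X^I(s))_{s\in I'}$ has the law of $L(s)+\tilde X^{I'}(s)$, where $L$ is the linear interpolation between $X^I(a)$ and $X^I(b)$ and $\tilde X^{I'}$ is an independent copy of $X^{I'}$. (v) For $a\in\mathbb{R}$, $c>0$: $(X^{I-a}(t-a))_{t\in I}\overset{(d)}{=}(X^I(t))_{t\in I}$ and $(c^{-1/2}X^{cI}(ct))_{t\in I}\overset{(d)}{=}(X^I(t))_{t\in I}$. *)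

theory Defs
  imports "HOL-Probability.Probability"
begin

definition logplus :: "real \<Rightarrow> real" where
  "logplus x = (if \<bar>x\<bar> \<le> 1 then 0 else ln \<bar>x\<bar>)"

definition proc_law :: "'w measure \<Rightarrow> real \<Rightarrow> real \<Rightarrow> (real \<Rightarrow> 'w \<Rightarrow> real) \<Rightarrow> (real \<Rightarrow> real) measure" where
  "proc_law Q a b Y = distr Q (Pi\<^sub>M {a..b} (\<lambda>_. borel)) (\<lambda>\<omega>. \<lambda>t\<in>{a..b}. Y t \<omega>)"

definition lin_interp :: "real \<Rightarrow> real \<Rightarrow> real \<Rightarrow> real \<Rightarrow> real \<Rightarrow> real" where
  "lin_interp c d u v t = u + (t - c) / (d - c) * (v - u)"

end

theory Submission
  imports Defs
begin

text \<open>
  Let X_n = X^[0,2^n](1) and Z = X^[0,1](1/2). The Markov property on [0,2^(n+1)] at the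
  subinterval [0,2^n], together with X(0) = 0, shows that X_(n+1) has the law of
  2^(-n) X^[0,2^(n+1)](2^n) + X_n' with X_n' a copy of X_n, and by scaling the first summand
  has the law of 2^(-(n-1)/2) Z. Splitting the level 1 + 2K/(q-1), q = 2^(1/4), into the
  pieces 2K q^(-k) therefore bounds P(X_n >= 1 + 2K/(q-1)) by the sum over k >= 1 of
  P(Z >= K q^k), uniformly in n. That sum is at most E[(log^+ Z - log K)^+] / log q, which
  tends to 0 as K -> infinity because log^+ Z is integrable.
\<close>

lemma measure_ge_eq_if_proc_law_eq:
  assumes eq: "proc_law Q a b Y = proc_law Q' a b Y'"
    and Y: "\<And>t. t \<in> {a..b} \<Longrightarrow> Y t \<in> borel_measurable Q"
    and Y': "\<And>t. t \<in> {a..b} \<Longrightarrow> Y' t \<in> borel_measurable Q'"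
    and t: "t \<in> {a..b}"
  shows "measure Q {\<omega>\<in>space Q. r \<le> Y t \<omega>} = measure Q' {\<omega>\<in>space Q'. r \<le> Y' t \<omega>}"
proof -
  let ?N = "Pi\<^sub>M {a..b} (\<lambda>_. borel :: real measure)"
  let ?A = "{f\<in>space ?N. r \<le> f t}"
  have "(\<lambda>f. f t) \<in> borel_measurable ?N"
    using t by (rule measurable_component_singleton)
  then have A: "?A \<in> sets ?N" by measurable
  have F: "(\<lambda>\<omega>. \<lambda>t\<in>{a..b}. Y t \<omega>) \<in> measurable Q ?N"
    by (rule measurable_restrict) (rule Y)
  have G: "(\<lambda>\<omega>. \<lambda>t\<in>{a..b}. Y' t \<omega>) \<in> measurable Q' ?N"
    by (rule measurable_restrict) (rule Y')
  have "measure Q {\<omega>\<in>space Q. r \<le> Y t \<omega>} = measure (proc_law Q a b Y) ?A"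
    unfolding proc_law_def using t
    by (subst measure_distr[OF F A]) (auto intro!: arg_cong[where f="measure Q"] simp: space_PiM)
  also have "\<dots> = measure (proc_law Q' a b Y') ?A" by (simp add: eq)
  also have "\<dots> = measure Q' {\<omega>\<in>space Q'. r \<le> Y' t \<omega>}"
    unfolding proc_law_def using t
    by (subst measure_distr[OF G A]) (auto intro!: arg_cong[where f="measure Q'"] simp: space_PiM)
  finally show ?thesis .
qed

lemma borel_measurable_logplus [measurable]: "logplus \<in> borel_measurable borel"
  unfolding logplus_def by measurable

lemma sum_indicator_multiples_le:
  fixes c y :: real
  assumes c: "c > 0"
  shows "(\<Sum>k=1..n. if c * real k \<le> y then 1 else 0 :: real) \<le> max 0 y / c"
proof (induction n)
  case (Suc n)
  show ?case
  proof (cases "c * real (Suc n) \<le> y")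
    case True
    have "(\<Sum>k=1..Suc n. if c * real k \<le> y then 1 else 0 :: real) \<le> (\<Sum>k=1..Suc n. 1)"
      by (intro sum_mono) auto
    also have "\<dots> \<le> max 0 y / c" using True c by (simp add: field_simps)
    finally show ?thesis .
  qed (use Suc in simp)
qed (use c in simp)

lemma sum_inverse_powers_le:
  fixes q :: real
  assumes q: "q > 1"
  shows "(\<Sum>k=1..n. 1 / q^k) \<le> 1 / (q - 1)"
proof -
  have "(\<Sum>k=1..n. 1 / q^k) = (1 - 1 / q^n) / (q - 1)"
  proof (induction n)
    case (Suc n)
    have "(\<Sum>k=1..Suc n. 1 / q^k) = (1 - 1 / q^n) / (q - 1) + 1 / q^Suc n"
      using Suc by (simp add: sum.cl_ivl_Suc)
    also have "\<dots> = (1 - 1 / q^Suc n) / (q - 1)" using q by (simp add: field_simps)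
    finally show ?case .
  qed simp
  then show ?thesis using q by (simp add: divide_right_mono)
qed

lemma integral_excess_tendsto_0:
  fixes f :: "'a \<Rightarrow> real"
  assumes f: "integrable M f"
  shows "(\<lambda>m::nat. \<integral>x. max 0 (f x - real m) \<partial>M) \<longlonglongrightarrow> 0"
proof -
  have "(\<lambda>m::nat. \<integral>x. max 0 (f x - real m) \<partial>M) \<longlonglongrightarrow> (\<integral>x. 0 \<partial>M)"
  proof (rule integral_dominated_convergence[where w="\<lambda>x. \<bar>f x\<bar>"])
    show "AE x in M. (\<lambda>m. max 0 (f x - real m)) \<longlonglongrightarrow> 0"
    proof (rule AE_I2)
      fix x
      obtain N :: nat where "f x \<le> real N" using real_arch_simple by blast
      then have "\<forall>\<^sub>F m in sequentially. max 0 (f x - real m) = 0"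
        unfolding eventually_sequentially by (intro exI[of _ N]) auto
      then show "(\<lambda>m. max 0 (f x - real m)) \<longlonglongrightarrow> 0" by (rule tendsto_eventually)
    qed
  qed (use f in auto)
  then show ?thesis by simp
qed

lemma (in prob_space) sum_prob_ge_geometric_le:
  fixes Z :: "'a \<Rightarrow> real"
  assumes Z [measurable]: "Z \<in> borel_measurable M"
    and L: "integrable M (\<lambda>\<omega>. logplus (Z \<omega>))"
    and q: "q > 1" and K: "K \<ge> 1"
  shows "(\<Sum>k=1..n. prob {\<omega>\<in>space M. K * q^k \<le> Z \<omega>})
           \<le> (\<integral>\<omega>. max 0 (logplus (Z \<omega>) - ln K) \<partial>M) / ln q"
proof -
  define A where "A k = {\<omega>\<in>space M. ln q * real k \<le> logplus (Z \<omega>) - ln K}" for k :: nat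
  have A [measurable]: "A k \<in> events" for k
    unfolding A_def by measurable
  have lnq: "ln q > 0" using q by simp
  have tail_in_A: "prob {\<omega>\<in>space M. K * q^k \<le> Z \<omega>} \<le> prob (A k)" if k: "k \<ge> 1" for k
  proof (rule finite_measure_mono[OF _ A])
    show "{\<omega>\<in>space M. K * q^k \<le> Z \<omega>} \<subseteq> A k"
    proof safe
      fix \<omega> assume \<omega>: "\<omega> \<in> space M" "K * q^k \<le> Z \<omega>"
      have "1 < q^k" using q k by simp
      moreover have "q^k \<le> K * q^k" using K q by simp
      ultimately have "1 < K * q^k" by linarith
      then have "logplus (Z \<omega>) = ln (Z \<omega>)" "ln (K * q^k) \<le> ln (Z \<omega>)"
        using \<omega> by (auto simp: logplus_def)
      moreover have "ln (K * q^k) = ln K + ln q * real k"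
        using K q by (simp add: ln_mult ln_realpow)
      ultimately show "\<omega> \<in> A k" using \<omega> by (simp add: A_def)
    qed
  qed
  have "(\<Sum>k=1..n. prob (A k)) = (\<integral>\<omega>. (\<Sum>k=1..n. indicator (A k) \<omega>) \<partial>M)"
    by (simp add: Bochner_Integration.integral_sum emeasure_eq_measure)
  also have "\<dots> \<le> (\<integral>\<omega>. max 0 (logplus (Z \<omega>) - ln K) / ln q \<partial>M)"
  proof (rule integral_mono)
    show "integrable M (\<lambda>\<omega>. max 0 (logplus (Z \<omega>) - ln K) / ln q)"
      using L by (intro integrable_divide integrable_max integrable_diff) auto
    fix \<omega> assume "\<omega> \<in> space M"
    then have "(\<Sum>k=1..n. indicator (A k) \<omega> :: real)
        = (\<Sum>k=1..n. if ln q * real k \<le> logplus (Z \<omega>) - ln K then 1 else 0)"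
      by (intro sum.cong) (auto simp: A_def indicator_def)
    also have "\<dots> \<le> max 0 (logplus (Z \<omega>) - ln K) / ln q"
      by (rule sum_indicator_multiples_le[OF lnq])
    finally show "(\<Sum>k=1..n. indicator (A k) \<omega> :: real) \<le> max 0 (logplus (Z \<omega>) - ln K) / ln q" .
  qed (simp add: emeasure_eq_measure)
  finally have "(\<Sum>k=1..n. prob (A k)) \<le> (\<integral>\<omega>. max 0 (logplus (Z \<omega>) - ln K) \<partial>M) / ln q"
    by simp
  moreover have "(\<Sum>k=1..n. prob {\<omega>\<in>space M. K * q^k \<le> Z \<omega>}) \<le> (\<Sum>k=1..n. prob (A k))"
    by (intro sum_mono tail_in_A) simp
  ultimately show ?thesis by linarith
qed

lemma (in prob_space) geometric_tail_sums_uniformly_small: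
  fixes Z :: "'a \<Rightarrow> real"
  assumes Z: "Z \<in> borel_measurable M"
    and L: "integrable M (\<lambda>\<omega>. logplus (Z \<omega>))"
    and q: "q > 1" and \<epsilon>: "\<epsilon> > 0"
  obtains K where "K \<ge> 1" "\<And>n. (\<Sum>k=1..n. prob {\<omega>\<in>space M. K * q^k \<le> Z \<omega>}) \<le> \<epsilon>"
proof -
  have "\<epsilon> * ln q > 0" using q \<epsilon> by simp
  with integral_excess_tendsto_0[OF L]
  have "\<forall>\<^sub>F m in sequentially. (\<integral>\<omega>. max 0 (logplus (Z \<omega>) - real m) \<partial>M) < \<epsilon> * ln q"
    by (rule order_tendstoD(2))
  then obtain m :: nat where m: "(\<integral>\<omega>. max 0 (logplus (Z \<omega>) - real m) \<partial>M) < \<epsilon> * ln q"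
    by (auto simp: eventually_sequentially)
  show ?thesis
  proof
    show "exp (real m) \<ge> 1" by simp
    fix n
    have "(\<Sum>k=1..n. prob {\<omega>\<in>space M. exp (real m) * q^k \<le> Z \<omega>})
        \<le> (\<integral>\<omega>. max 0 (logplus (Z \<omega>) - real m) \<partial>M) / ln q"
      using sum_prob_ge_geometric_le[OF Z L q, of "exp (real m)" n] by simp
    also have "\<dots> \<le> \<epsilon>" using m q by (simp add: divide_le_eq)
    finally show "(\<Sum>k=1..n. prob {\<omega>\<in>space M. exp (real m) * q^k \<le> Z \<omega>}) \<le> \<epsilon>" .
  qed
qed

lemma quartic_root_two_threshold:
  fixes q K :: real
  assumes q: "q > 0" "q^4 = 2"
  shows "2 * K / q^Suc n * 2^n / sqrt (2^Suc n) = K * q^Suc n"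
proof -
  define r where "r = q^Suc n"
  have r: "r > 0" "r^4 = 2 * 2^n"
    using q unfolding r_def by (simp, metis power_mult mult.commute power_Suc)
  then have "sqrt (2 * 2^n) = r^2"
    by (intro real_sqrt_unique) (simp_all flip: power_mult)
  then have "2 * K / r * 2^n / sqrt (2^Suc n) = K * r^4 / r^3"
    using r by (simp add: field_simps eval_nat_numeral)
  also have "\<dots> = K * r" using r(1) by (simp add: field_simps eval_nat_numeral)
  finally show ?thesis by (simp add: r_def)
qed

text \<open>Conditions (iii), (iv) and the scaling part of (v).\<close>
locale pinned_markov_family = prob_space P
  for P :: "'a measure" +
  fixes X :: "real \<Rightarrow> real \<Rightarrow> real \<Rightarrow> 'a \<Rightarrow> real"
  assumes measurable_X: "\<And>a b t. a \<le> b \<Longrightarrow> t \<in> {a..b} \<Longrightarrow> X a b t \<in> borel_measurable P"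
    and X_endpoints: "\<And>a b \<omega>. a \<le> b \<Longrightarrow> \<omega> \<in> space P \<Longrightarrow> X a b a \<omega> = 0 \<and> X a b b \<omega> = 0"
    and markov: "\<And>a b c d. a \<le> c \<Longrightarrow> c \<le> d \<Longrightarrow> d \<le> b \<Longrightarrow>
                   proc_law P a b (X a b) =
                   proc_law (P \<Otimes>\<^sub>M P) a b
                     (\<lambda>t \<omega>\<omega>'. if t \<in> {c..d}
                        then lin_interp c d (X a b c (fst \<omega>\<omega>')) (X a b d (fst \<omega>\<omega>')) t
                             + X c d t (snd \<omega>\<omega>')
                        else X a b t (fst \<omega>\<omega>'))"
    and scaling: "\<And>a b c. a \<le> b \<Longrightarrow> c > 0 \<Longrightarrow>
                   proc_law P a b (\<lambda>t \<omega>. X (c * a) (c * b) (c * t) \<omega> / sqrt c)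
                     = proc_law P a b (X a b)"
begin

lemma sets_X_ge: "a \<le> b \<Longrightarrow> t \<in> {a..b} \<Longrightarrow> {\<omega>\<in>space P. r \<le> X a b t \<omega>} \<in> events"
  using measurable_X[of a b t] by measurable

lemma prob_ge_split_at:
  assumes d: "0 < d" "d \<le> b" and u: "u \<in> {0..d}"
  shows "prob {\<omega>\<in>space P. s + t \<le> X 0 b u \<omega>}
           \<le> prob {\<omega>\<in>space P. s \<le> u / d * X 0 b d \<omega>} + prob {\<omega>\<in>space P. t \<le> X 0 d u \<omega>}"
proof -
  interpret PP: pair_prob_space P P by unfold_locales
  let ?Y = "\<lambda>t \<omega>\<omega>'. if t \<in> {0..d}
              then lin_interp 0 d (X 0 b 0 (fst \<omega>\<omega>')) (X 0 b d (fst \<omega>\<omega>')) t + X 0 d t (snd \<omega>\<omega>')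
              else X 0 b t (fst \<omega>\<omega>')"
  let ?A = "{\<omega>\<in>space P. s \<le> u / d * X 0 b d \<omega>}" and ?B = "{\<omega>\<in>space P. t \<le> X 0 d u \<omega>}"
  have fst_X: "(\<lambda>x. X 0 b v (fst x)) \<in> borel_measurable (P \<Otimes>\<^sub>M P)" if "v \<in> {0..b}" for v
    by (rule measurable_compose[OF measurable_fst measurable_X]) (use that in auto)
  have snd_X: "(\<lambda>x. X 0 d v (snd x)) \<in> borel_measurable (P \<Otimes>\<^sub>M P)" if "v \<in> {0..d}" for v
    by (rule measurable_compose[OF measurable_snd measurable_X]) (use that in auto)
  have Y: "?Y v \<in> borel_measurable (P \<Otimes>\<^sub>M P)" if v: "v \<in> {0..b}" for v
  proof (cases "v \<in> {0..d}")
    case True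
    then show ?thesis
      using fst_X[of 0] fst_X[of d] snd_X[of v] d unfolding lin_interp_def by simp
  next
    case False
    then have "?Y v = (\<lambda>x. X 0 b v (fst x))" by auto
    then show ?thesis using fst_X[OF v] by simp
  qed
  have "X 0 b d \<in> borel_measurable P" using measurable_X d by simp
  then have A: "?A \<in> events" by measurable
  have B: "?B \<in> events" using sets_X_ge[of 0 d u] d u by simp
  have "prob {\<omega>\<in>space P. s + t \<le> X 0 b u \<omega>}
      = measure (P \<Otimes>\<^sub>M P) {\<omega>\<in>space (P \<Otimes>\<^sub>M P). s + t \<le> ?Y u \<omega>}"
    by (rule measure_ge_eq_if_proc_law_eq[OF markov[of 0 0 d b]]) (use measurable_X Y d u in auto)
  also have "\<dots> \<le> measure (P \<Otimes>\<^sub>M P) (?A \<times> space P \<union> space P \<times> ?B)"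
  proof (rule PP.P.finite_measure_mono)
    show "{\<omega>\<in>space (P \<Otimes>\<^sub>M P). s + t \<le> ?Y u \<omega>} \<subseteq> ?A \<times> space P \<union> space P \<times> ?B"
    proof
      fix x assume x: "x \<in> {\<omega>\<in>space (P \<Otimes>\<^sub>M P). s + t \<le> ?Y u \<omega>}"
      then have sp: "fst x \<in> space P" "snd x \<in> space P" by (auto simp: space_pair_measure)
      then have "X 0 b 0 (fst x) = 0" using X_endpoints[of 0 b "fst x"] d by simp
      then have "s + t \<le> u / d * X 0 b d (fst x) + X 0 d u (snd x)"
        using x u by (simp add: lin_interp_def)
      then have "s \<le> u / d * X 0 b d (fst x) \<or> t \<le> X 0 d u (snd x)" by linarith
      then show "x \<in> ?A \<times> space P \<union> space P \<times> ?B" using sp by (cases x) auto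
    qed
    show "?A \<times> space P \<union> space P \<times> ?B \<in> sets (P \<Otimes>\<^sub>M P)" using A B by auto
  qed
  also have "\<dots> \<le> measure (P \<Otimes>\<^sub>M P) (?A \<times> space P) + measure (P \<Otimes>\<^sub>M P) (space P \<times> ?B)"
    by (rule measure_subadditive) (use A B in auto)
  also have "\<dots> = prob ?A + prob ?B"
    using A B by (simp add: measure_def emeasure_pair_measure_Times emeasure_space_1)
  finally show ?thesis .
qed

lemma prob_ge_rescale:
  assumes ab: "a \<le> b" and c: "c > 0" and t: "t \<in> {a..b}"
  shows "prob {\<omega>\<in>space P. r \<le> X (c * a) (c * b) (c * t) \<omega>}
           = prob {\<omega>\<in>space P. r / sqrt c \<le> X a b t \<omega>}"
proof -
  have scaled_X: "(\<lambda>\<omega>. X (c * a) (c * b) (c * v) \<omega> / sqrt c) \<in> borel_measurable P"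
    if "v \<in> {a..b}" for v
    using measurable_X[of "c * a" "c * b" "c * v"] that ab c by (simp add: mult_left_mono)
  have "prob {\<omega>\<in>space P. r \<le> X (c * a) (c * b) (c * t) \<omega>}
      = prob {\<omega>\<in>space P. r / sqrt c \<le> X (c * a) (c * b) (c * t) \<omega> / sqrt c}"
    using c by (auto simp: divide_le_cancel intro!: arg_cong[where f=prob])
  also have "\<dots> = prob {\<omega>\<in>space P. r / sqrt c \<le> X a b t \<omega>}"
    by (rule measure_ge_eq_if_proc_law_eq[OF scaling[OF ab c]]) (use scaled_X measurable_X t in auto)
  finally show ?thesis .
qed

lemma prob_ge_dyadic_step:
  "prob {\<omega>\<in>space P. s + t \<le> X 0 (2^Suc n) 1 \<omega>}
     \<le> prob {\<omega>\<in>space P. s * 2^n / sqrt (2^Suc n) \<le> X 0 1 (1/2) \<omega>}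
       + prob {\<omega>\<in>space P. t \<le> X 0 (2^n) 1 \<omega>}"
proof -
  have "prob {\<omega>\<in>space P. s \<le> 1 / 2^n * X 0 (2^Suc n) (2^n) \<omega>}
      = prob {\<omega>\<in>space P. s * 2^n \<le> X (2^Suc n * 0) (2^Suc n * 1) (2^Suc n * (1/2)) \<omega>}"
    by (auto simp: field_simps intro!: arg_cong[where f=prob])
  also have "\<dots> = prob {\<omega>\<in>space P. s * 2^n / sqrt (2^Suc n) \<le> X 0 1 (1/2) \<omega>}"
    by (rule prob_ge_rescale) auto
  finally show ?thesis using prob_ge_split_at[of "2^n" "2^Suc n" 1 s t] by simp
qed

lemma prob_ge_dyadic_le_sum:
  fixes q K :: real
  assumes q: "q > 0" "q^4 = 2"
  shows "prob {\<omega>\<in>space P. 1 + (\<Sum>k=1..n. 2 * K / q^k) \<le> X 0 (2^n) 1 \<omega>}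
           \<le> (\<Sum>k=1..n. prob {\<omega>\<in>space P. K * q^k \<le> X 0 1 (1/2) \<omega>})"
proof (induction n)
  case 0
  have "{\<omega>\<in>space P. 1 + (\<Sum>k=1..0. 2 * K / q^k) \<le> X 0 (2^0) 1 \<omega>} = {}"
    using X_endpoints[of 0 1] by auto
  then show ?case by (simp only: measure_empty) simp
next
  case (Suc n)
  let ?S = "\<lambda>n. \<Sum>k=1..n. 2 * K / q^k"
  have "prob {\<omega>\<in>space P. 1 + ?S (Suc n) \<le> X 0 (2^Suc n) 1 \<omega>}
      = prob {\<omega>\<in>space P. 2 * K / q^Suc n + (1 + ?S n) \<le> X 0 (2^Suc n) 1 \<omega>}"
    by (simp add: sum.cl_ivl_Suc add_ac)
  also have "\<dots> \<le> prob {\<omega>\<in>space P. K * q^Suc n \<le> X 0 1 (1/2) \<omega>}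
                  + prob {\<omega>\<in>space P. 1 + ?S n \<le> X 0 (2^n) 1 \<omega>}"
    using prob_ge_dyadic_step[of "2 * K / q^Suc n" "1 + ?S n" n]
    by (simp only: quartic_root_two_threshold[OF q])
  also have "\<dots> \<le> (\<Sum>k=1..Suc n. prob {\<omega>\<in>space P. K * q^k \<le> X 0 1 (1/2) \<omega>})"
    using Suc by (simp add: sum.cl_ivl_Suc)
  finally show ?case .
qed

lemma prob_ge_dyadic_le_tail_sum:
  fixes q K :: real
  assumes q: "q > 1" "q^4 = 2" and K: "K \<ge> 0"
  shows "prob {\<omega>\<in>space P. 1 + 2 * K / (q - 1) \<le> X 0 (2^n) 1 \<omega>}
           \<le> (\<Sum>k=1..n. prob {\<omega>\<in>space P. K * q^k \<le> X 0 1 (1/2) \<omega>})"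
proof -
  have "(\<Sum>k=1..n. 2 * K / q^k) = 2 * K * (\<Sum>k=1..n. 1 / q^k)"
    by (simp add: sum_distrib_left)
  also have "\<dots> \<le> 2 * K / (q - 1)"
    using mult_left_mono[OF sum_inverse_powers_le[OF q(1)], of "2 * K" n] K by simp
  finally have "prob {\<omega>\<in>space P. 1 + 2 * K / (q - 1) \<le> X 0 (2^n) 1 \<omega>}
      \<le> prob {\<omega>\<in>space P. 1 + (\<Sum>k=1..n. 2 * K / q^k) \<le> X 0 (2^n) 1 \<omega>}"
    by (intro finite_measure_mono sets_X_ge) auto
  also have "\<dots> \<le> (\<Sum>k=1..n. prob {\<omega>\<in>space P. K * q^k \<le> X 0 1 (1/2) \<omega>})"
    using q by (intro prob_ge_dyadic_le_sum) auto
  finally show ?thesis .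
qed

end

theorem lemma5p1:
  fixes P :: "'a measure"
    and X :: "real \<Rightarrow> real \<Rightarrow> real \<Rightarrow> 'a \<Rightarrow> real"
  assumes prob: "prob_space P"
    and meas: "\<And>a b t. a \<le> b \<Longrightarrow> t \<in> {a..b} \<Longrightarrow> X a b t \<in> borel_measurable P"
    and cond_i: "\<And>a b t. a \<le> b \<Longrightarrow> t \<in> {a..b} \<Longrightarrow>
                   integrable P (\<lambda>\<omega>. logplus (X a b t \<omega>))"
    and cond_ii: "\<And>a b t \<epsilon>. a \<le> b \<Longrightarrow> t \<in> {a..b} \<Longrightarrow> \<epsilon> > 0 \<Longrightarrow>
                   ((\<lambda>s. measure P {\<omega> \<in> space P. \<bar>X a b t \<omega> - X a b s \<omega>\<bar> > \<epsilon>})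
                      \<longlongrightarrow> 0) (at t within {a..b})"
    and cond_iii: "\<And>a b \<omega>. a \<le> b \<Longrightarrow> \<omega> \<in> space P \<Longrightarrow> X a b a \<omega> = 0 \<and> X a b b \<omega> = 0"
    and cond_iv: "\<And>a b c d. a \<le> c \<Longrightarrow> c \<le> d \<Longrightarrow> d \<le> b \<Longrightarrow>
                   proc_law P a b (X a b) =
                   proc_law (P \<Otimes>\<^sub>M P) a b
                     (\<lambda>t \<omega>\<omega>'. if t \<in> {c..d}
                        then lin_interp c d (X a b c (fst \<omega>\<omega>')) (X a b d (fst \<omega>\<omega>')) t
                             + X c d t (snd \<omega>\<omega>')
                        else X a b t (fst \<omega>\<omega>'))"
    and cond_v_shift: "\<And>a b s. a \<le> b \<Longrightarrow>
                   proc_law P a b (\<lambda>t. X (a - s) (b - s) (t - s)) = proc_law P a b (X a b)"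
    and cond_v_scale: "\<And>a b c. a \<le> b \<Longrightarrow> c > 0 \<Longrightarrow>
                   proc_law P a b (\<lambda>t \<omega>. X (c * a) (c * b) (c * t) \<omega> / sqrt c)
                     = proc_law P a b (X a b)"
  shows "\<forall>\<epsilon>>0. \<exists>K>0. \<forall>n::nat.
           measure P {\<omega> \<in> space P. X 0 (2 ^ n) 1 \<omega> \<ge> K} \<le> \<epsilon>"
proof -
  interpret pinned_markov_family P X
    by (intro pinned_markov_family.intro pinned_markov_family_axioms.intro prob)
       (use meas cond_iii cond_iv cond_v_scale in auto)
  define q :: real where "q = root 4 2"
  have q: "q > 1" "q^4 = 2" by (simp_all add: q_def)
  show ?thesis
  proof (intro allI impI)
    fix \<epsilon> :: real assume "\<epsilon> > 0"
    obtain K where K: "K \<ge> 1"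
      and tails: "\<And>n. (\<Sum>k=1..n. prob {\<omega>\<in>space P. K * q^k \<le> X 0 1 (1/2) \<omega>}) \<le> \<epsilon>"
      using geometric_tail_sums_uniformly_small[OF meas cond_i q(1) \<open>\<epsilon> > 0\<close>, of 0 1 "1/2"]
      by auto
    have "1 + 2 * K / (q - 1) > 0" using K q by (intro add_pos_nonneg divide_nonneg_pos) auto
    moreover have "prob {\<omega>\<in>space P. X 0 (2^n) 1 \<omega> \<ge> 1 + 2 * K / (q - 1)} \<le> \<epsilon>" for n
      using prob_ge_dyadic_le_tail_sum[OF q, of K n] tails[of n] K by simp
    ultimately show "\<exists>K>0. \<forall>n::nat. prob {\<omega>\<in>space P. X 0 (2^n) 1 \<omega> \<ge> K} \<le> \<epsilon>"
      by blast
  qed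
qed

end
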